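(* Let $F$ be the elementary cellular automaton with rule number 44. For every nonempty finite word $u\in\{0,1\}^*$, the deterministic communication complexity of $\textsc{SInv}_{F,u}$ restricted to inputs of length $n$ is bounded by a constant independent of $n$.
   Context: An elementary cellular automaton (ECA) with rule number $N\in\{0,\dots,255\}$ is the map $F:\{0,1\}^{\mathbb Z}\to\{0,1\}^{\mathbb Z}$ given by $F(x)_i=f(x_{i-1},x_i,x_{i+1})$. Here the local rule $f:\{0,1\}^3\to\{0,1\}$ is determined by $N=\sum_{a,b,c\in\{0,1\}}2^{4a+2b+c}f(a,b,c)$. For a nonempty finite word $u$, $p_u\in\{0,1\}^{\mathbb Z}$ is defined by $(p_u)_i=u_{i\bmod |u|}$. For a finite word $x$, $p_u[x]$ is the configuration equal to $x$ on positions $0,\dots,|x|-1$ and to $p_u$ elsewhere. $\textsc{SInv}_{F,u}$ is the decision problem: on input a finite word $x$, decide whether there is an integer $w$ such that for all $t\ge0$ the set of positions where $F^t(p_u)$ and $F^t(p_u[x])$ differ is contained in an interval of length $w$. For each $n$, it is regarded as a function $\{0,1\}^n\to\{0,1\}$. For a function $g:X\times Y\to Z$, $D(g)$ is the minimal depth of a deterministic two-party protocol computing $g$. In such a protocol, Alice knows $x$ and Bob knows $y$. The protocol is a binary tree: each internal node is labelled by a function of Alice's input only or of Bob's input only, with values in $\{\text{left},\text{right}\}$, and each leaf is labelled by an output value. For $g:\{0,1\}^m\to Z$, set $D(g)=\max_{0\le i<m}D(g_i)$, where $g_i:\{0,1\}^i\times\{0,1\}^{m-i}\to Z$ is $g_i(x,y)=g(xy)$.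 *)

theory Defs
  imports Main
begin

type_synonym config = "int \<Rightarrow> bool"

definition eca_local :: "nat \<Rightarrow> bool \<Rightarrow> bool \<Rightarrow> bool \<Rightarrow> bool" where
  "eca_local N a b c = odd (N div 2 ^ (4 * of_bool a + 2 * of_bool b + of_bool c))"

definition eca :: "nat \<Rightarrow> config \<Rightarrow> config" where
  "eca N x = (\<lambda>i. eca_local N (x (i - 1)) (x i) (x (i + 1)))"

definition per :: "bool list \<Rightarrow> config" where
  "per u = (\<lambda>i. u ! nat (i mod int (length u)))"

definition per_patch :: "bool list \<Rightarrow> bool list \<Rightarrow> config" where
  "per_patch u x = (\<lambda>i. if 0 \<le> i \<and> i < int (length x) then x ! nat i else per u i)"

definition SInv :: "nat \<Rightarrow> bool list \<Rightarrow> bool list \<Rightarrow> bool" where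
  "SInv N u x = (\<exists>w::int. \<forall>t::nat. \<exists>a::int.
      {i. ((eca N ^^ t) (per u)) i \<noteq> ((eca N ^^ t) (per_patch u x)) i} \<subseteq> {a..<a + w})"

datatype ('a, 'b, 'z) protocol =
    Leaf 'z
  | AliceNode "'a \<Rightarrow> bool" "('a, 'b, 'z) protocol" "('a, 'b, 'z) protocol"
  | BobNode "'b \<Rightarrow> bool" "('a, 'b, 'z) protocol" "('a, 'b, 'z) protocol"

fun peval :: "('a, 'b, 'z) protocol \<Rightarrow> 'a \<Rightarrow> 'b \<Rightarrow> 'z" where
  "peval (Leaf z) x y = z"
| "peval (AliceNode f l r) x y = (if f x then peval l x y else peval r x y)"
| "peval (BobNode f l r) x y = (if f y then peval l x y else peval r x y)"

fun pdepth :: "('a, 'b, 'z) protocol \<Rightarrow> nat" where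
  "pdepth (Leaf z) = 0"
| "pdepth (AliceNode f l r) = Suc (max (pdepth l) (pdepth r))"
| "pdepth (BobNode f l r) = Suc (max (pdepth l) (pdepth r))"

definition D_split :: "(bool list \<Rightarrow> 'z) \<Rightarrow> nat \<Rightarrow> nat \<Rightarrow> nat" where
  "D_split g m i = (LEAST d. \<exists>P :: (bool list, bool list, 'z) protocol. pdepth P = d \<and>
      (\<forall>x y. length x = i \<longrightarrow> length y = m - i \<longrightarrow> peval P x y = g (x @ y)))"

definition D_cc :: "(bool list \<Rightarrow> 'z) \<Rightarrow> nat \<Rightarrow> nat" where
  "D_cc g m = Max (insert 0 ((\<lambda>i. D_split g m i) ` {..<m}))"

end

theory Submission
  imports Defs
begin

text \<open>Under rule 44 a pair of adjacent 0s (a wall) never changes, and no information crosses it.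
If some iterate of \<open>p\<^sub>u\<close> contains a wall then, by periodicity, walls sit on both sides of any
finite perturbation and confine the difference forever, so \<open>SInv\<close> is constantly true.
Otherwise \<open>p\<^sub>u\<close> is a shift of \<open>(011)\<^sup>\<infinity>\<close>; any other configuration agreeing with it on the left
produces a wall within two steps, and from then on walls appear arbitrarily far to the left while
the first one stays put, so the difference from the wall-free orbit of \<open>p\<^sub>u\<close> is unbounded.
Hence \<open>SInv(x)\<close> holds iff \<open>x\<close> is the corresponding prefix of \<open>p\<^sub>u\<close>. In both cases \<open>SInv\<close> is a
conjunction of tests on single letters, which Alice and Bob settle with one bit each.\<close>

lemma eca_44_apply:
  "eca 44 z i \<longleftrightarrow> \<not> z (i - 1) \<and> z i \<or> z (i - 1) \<and> \<not> z i \<and> z (i + 1)"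
  unfolding eca_def eca_local_def
  by (cases "z (i - 1)"; cases "z i"; cases "z (i + 1)"; simp)

lemma funpow_eca_Suc_apply:
  "(eca N ^^ Suc t) z i =
    eca_local N ((eca N ^^ t) z (i - 1)) ((eca N ^^ t) z i) ((eca N ^^ t) z (i + 1))"
  by (simp add: eca_def)

lemma funpow_eca_eq_outside:
  assumes "\<And>i. i < lo \<or> hi \<le> i \<Longrightarrow> z i = z' i"
    and "i < lo - int t \<or> hi + int t \<le> i"
  shows "(eca N ^^ t) z i = (eca N ^^ t) z' i"
  using assms(2)
proof (induction t arbitrary: i)
  case 0
  then show ?case using assms(1) by simp
next
  case (Suc t)
  have "(eca N ^^ t) z j = (eca N ^^ t) z' j" if "j \<in> {i - 1, i, i + 1}" for j
    using that Suc.prems by (intro Suc.IH) auto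
  then show ?case unfolding funpow_eca_Suc_apply by simp
qed

lemma eca_shift: "eca N (\<lambda>i. z (i + c)) = (\<lambda>i. eca N z (i + c))"
  by (simp add: eca_def algebra_simps)

lemma funpow_eca_shift: "(eca N ^^ t) (\<lambda>i. z (i + c)) = (\<lambda>i. (eca N ^^ t) z (i + c))"
  by (induction t) (simp_all add: eca_shift)

lemma funpow_eca_periodic:
  assumes "\<And>i. z (i + c) = z i"
  shows "(eca N ^^ t) z (i + c) = (eca N ^^ t) z i"
proof -
  have "(\<lambda>i. z (i + c)) = z" using assms by simp
  then show ?thesis by (metis funpow_eca_shift)
qed

lemma periodic_add_mult:
  fixes z :: "int \<Rightarrow> 'a" and k :: int
  assumes "\<And>i. z (i + c) = z i"
  shows "z (i + k * c) = z i"
proof (induction k rule: int_induct[where k = 0])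
  case (step1 k)
  then show ?case using assms[of "i + k * c"] by (simp add: algebra_simps)
next
  case (step2 k)
  then show ?case using assms[of "i + (k - 1) * c"] by (simp add: algebra_simps)
qed simp

definition wall :: "config \<Rightarrow> int \<Rightarrow> bool" where
  "wall z i \<longleftrightarrow> \<not> z i \<and> \<not> z (i + 1)"

lemma wall_eca_44: "wall z i \<Longrightarrow> wall (eca 44 z) i"
  by (simp add: wall_def eca_44_apply)

lemma wall_funpow_eca_44: "wall z i \<Longrightarrow> wall ((eca 44 ^^ t) z) i"
  by (induction t) (simp_all add: wall_eca_44)

lemma funpow_eca_44_eq_outside_walls:
  assumes walls: "wall z c1" "wall z c2" "wall z' c1" "wall z' c2"
    and agree: "\<And>i. i < c1 \<or> c2 + 1 < i \<Longrightarrow> z i = z' i"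
    and "i < c1 \<or> c2 + 1 < i"
  shows "(eca 44 ^^ t) z i = (eca 44 ^^ t) z' i"
  using assms(6)
proof (induction t arbitrary: i)
  case 0
  then show ?case using agree by simp
next
  case (Suc t)
  have "(eca 44 ^^ t) z j = (eca 44 ^^ t) z' j" if "j \<in> {i - 1, i, i + 1}" for j
  proof (cases "j < c1 \<or> c2 + 1 < j")
    case True
    then show ?thesis by (rule Suc.IH)
  next
    case False
    with that Suc.prems have "j = c1 \<or> j = c2 + 1" by auto
    then show ?thesis
      using walls[THEN wall_funpow_eca_44[where t = t]] by (auto simp: wall_def)
  qed
  then show ?case unfolding funpow_eca_Suc_apply by simp
qed

lemma wall_eca_44_moves_left:
  assumes "wall z j"
  shows "\<exists>m j'. j' < j \<and> wall ((eca 44 ^^ m) z) j'"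
proof (cases "z (j - 1)")
  case False
  then have "wall ((eca 44 ^^ 0) z) (j - 1)" using assms by (simp add: wall_def)
  then show ?thesis by (intro exI[of _ 0] exI[of _ "j - 1"]) simp
next
  case one: True
  show ?thesis
  proof (cases "z (j - 2)")
    case True
    then have "wall ((eca 44 ^^ 1) z) (j - 1)"
      using one assms by (simp add: wall_def eca_44_apply)
    then show ?thesis by (intro exI[of _ 1] exI[of _ "j - 1"]) simp
  next
    case zero: False
    show ?thesis
    proof (cases "z (j - 3)")
      case False
      then have "wall ((eca 44 ^^ 0) z) (j - 3)" using zero by (simp add: wall_def)
      then show ?thesis by (intro exI[of _ 0] exI[of _ "j - 3"]) simp
    next
      case True
      then have "eca 44 z (j - 2)" "eca 44 z (j - 1)" "wall (eca 44 z) j"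
        using one zero assms by (simp_all add: wall_def eca_44_apply ac_simps)
      then have "wall ((eca 44 ^^ 2) z) (j - 1)"
        by (simp add: numeral_2_eq_2 wall_def eca_44_apply[of "eca 44 z"] ac_simps)
      then show ?thesis by (intro exI[of _ 2] exI[of _ "j - 1"]) simp
    qed
  qed
qed

lemma walls_eca_44_far_left:
  assumes "wall ((eca 44 ^^ t0) y) i0"
  shows "\<exists>t\<ge>t0. \<exists>j\<le>i0 - int s. wall ((eca 44 ^^ t) y) j"
proof (induction s)
  case 0
  then show ?case using assms by auto
next
  case (Suc s)
  then obtain t j where "t \<ge> t0" "j \<le> i0 - int s" "wall ((eca 44 ^^ t) y) j"
    by blast
  moreover obtain m j' where "j' < j" "wall ((eca 44 ^^ m) ((eca 44 ^^ t) y)) j'"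
    using wall_eca_44_moves_left[OF \<open>wall ((eca 44 ^^ t) y) j\<close>] by blast
  ultimately have "m + t \<ge> t0" "j' \<le> i0 - int (Suc s)" "wall ((eca 44 ^^ (m + t)) y) j'"
    by (simp_all add: funpow_add)
  then show ?case by blast
qed

text \<open>These are exactly the three shifts of the periodic configuration \<open>(011)\<^sup>\<infinity>\<close>.\<close>

definition is_011_shift :: "config \<Rightarrow> bool" where
  "is_011_shift q \<longleftrightarrow>
    (\<forall>i. (q i, q (i + 1), q (i + 2)) \<in> {(False, True, True), (True, False, True), (True, True, False)})"

lemma is_011_shift_period:
  assumes "is_011_shift q"
  shows "q (i + 3) = q i"
proof -
  have "(q i, q (i + 1), q (i + 2)) \<in> {(False, True, True), (True, False, True), (True, True, False)}"
    "(q (i + 1), q (i + 2), q (i + 3)) \<in> {(False, True, True), (True, False, True), (True, True, False)}"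
    using assms[unfolded is_011_shift_def, rule_format, of i]
      assms[unfolded is_011_shift_def, rule_format, of "i + 1"]
    by (simp_all add: add.assoc)
  then show ?thesis by auto
qed

lemma wall_eca_44_within_two_steps:
  assumes "\<not> is_011_shift z"
  shows "\<exists>k\<le>2. \<exists>i. wall ((eca 44 ^^ k) z) i"
proof -
  have wall_after_111: "wall (eca 44 z) (i + 1)" if "z i" "z (i + 1)" "z (i + 2)" for z i
    using that by (simp add: wall_def eca_44_apply algebra_simps)
  have wall_now: "\<exists>k\<le>2. \<exists>i. wall ((eca 44 ^^ k) z) i" if "wall z i" for i
    using that by (intro exI[of _ 0]) auto
  obtain i where "(z i, z (i + 1), z (i + 2)) \<notin>
      {(False, True, True), (True, False, True), (True, True, False)}"
    using assms unfolding is_011_shift_def by blast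
  then consider "wall z i" | "wall z (i + 1)" | "z i" "z (i + 1)" "z (i + 2)"
    | "\<not> z i" "z (i + 1)" "\<not> z (i + 2)"
    unfolding wall_def add.assoc by (cases "z i"; cases "z (i + 1)"; cases "z (i + 2)") simp_all
  then show ?thesis
  proof cases
    case 3
    then have "wall ((eca 44 ^^ 1) z) (i + 1)" by (simp add: wall_after_111)
    then show ?thesis by (intro exI[of _ 1]) auto
  next
    case 4
    consider "wall z (i - 1)" | "wall z (i + 2)" | "z (i - 1)" "z (i + 3)"
      using 4 unfolding wall_def by (cases "z (i - 1)"; cases "z (i + 3)") (simp_all add: add.assoc)
    then show ?thesis
    proof cases
      case 3
      with 4 have "eca 44 z i" "eca 44 z (i + 1)" "eca 44 z (i + 2)"
        by (simp_all add: eca_44_apply ac_simps)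
      then have "wall ((eca 44 ^^ 2) z) (i + 1)" by (simp add: numeral_2_eq_2 wall_after_111)
      then show ?thesis by (intro exI[of _ 2]) auto
    qed (use wall_now in blast)+
  qed (use wall_now in blast)+
qed

lemma periodic_wall_beyond:
  assumes periodic: "\<And>i. z (i + L) = z i" and "L > 0" and "wall z i0"
  obtains c1 c2 where "c1 \<le> lo" "hi \<le> c2" "wall z c1" "wall z c2"
proof -
  have wall_shift: "wall z (i0 + m * L)" for m
  proof -
    have "z (i0 + m * L) = z i0" "z (i0 + m * L + 1) = z (i0 + 1)"
      using periodic_add_mult[of z L, OF periodic] by (metis add.assoc add.commute)+
    then show ?thesis using \<open>wall z i0\<close> by (simp add: wall_def)
  qed
  define m1 where "m1 = \<bar>i0\<bar> + \<bar>lo\<bar>"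
  define m2 where "m2 = \<bar>i0\<bar> + \<bar>hi\<bar>"
  have "0 \<le> m1" "0 \<le> m2" by (simp_all add: m1_def m2_def)
  then have "m1 \<le> m1 * L" "m2 \<le> m2 * L"
    using \<open>L > 0\<close> by (simp_all add: mult_le_cancel_left1)
  moreover have "i0 - m1 \<le> lo" "hi \<le> i0 + m2"
    unfolding m1_def m2_def by arith+
  ultimately have "i0 + (- m1) * L \<le> lo" "hi \<le> i0 + m2 * L"
    by simp_all
  then show thesis using that wall_shift by blast
qed

lemma per_patch_eq_outside:
  "i < 0 \<or> int (length x) \<le> i \<Longrightarrow> per_patch u x i = per u i"
  by (auto simp: per_patch_def)

lemma SInv_44_if_wall:
  assumes "u \<noteq> []" and "wall ((eca 44 ^^ k) (per u)) i0"
  shows "SInv 44 u x"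
proof -
  define p where "p = per u"
  define y where "y = per_patch u x"
  define n where "n = int (length x)"
  have "(eca 44 ^^ k) p (i + int (length u)) = (eca 44 ^^ k) p i" for i
    using \<open>u \<noteq> []\<close> by (intro funpow_eca_periodic) (simp add: p_def per_def)
  moreover have "int (length u) > 0" using \<open>u \<noteq> []\<close> by simp
  ultimately obtain c1 c2 where c: "c1 \<le> - int k - 2" "n + int k \<le> c2"
    and p_walls: "wall ((eca 44 ^^ k) p) c1" "wall ((eca 44 ^^ k) p) c2"
    using periodic_wall_beyond[where lo = "- int k - 2" and hi = "n + int k"] assms(2)
    unfolding p_def by blast
  have cone: "(eca 44 ^^ t) p i = (eca 44 ^^ t) y i" if "i < - int t \<or> n + int t \<le> i" for t i
    using that by (intro funpow_eca_eq_outside[of 0 n]) (simp_all add: p_def y_def n_def per_patch_eq_outside)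
  have y_walls: "wall ((eca 44 ^^ k) y) c1" "wall ((eca 44 ^^ k) y) c2"
    using p_walls c cone[where t = k] by (simp_all add: wall_def)
  have outside: "(eca 44 ^^ t) p i = (eca 44 ^^ t) y i" if "i < c1 \<or> c2 + 1 < i" for t i
  proof (cases "t \<le> k")
    case True
    then show ?thesis using that c by (intro cone) auto
  next
    case False
    then obtain m where "t = m + k" by (metis add.commute le_add_diff_inverse nat_le_linear)
    have "(eca 44 ^^ m) ((eca 44 ^^ k) p) i = (eca 44 ^^ m) ((eca 44 ^^ k) y) i"
    proof (rule funpow_eca_44_eq_outside_walls[OF p_walls y_walls])
      show "(eca 44 ^^ k) p j = (eca 44 ^^ k) y j" if "j < c1 \<or> c2 + 1 < j" for j
        using that c by (intro cone) auto
    qed (rule that)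
    then show ?thesis by (simp add: \<open>t = m + k\<close> funpow_add)
  qed
  have "{i. (eca 44 ^^ t) p i \<noteq> (eca 44 ^^ t) y i} \<subseteq> {c1..<c1 + (c2 + 2 - c1)}" for t
  proof
    fix i
    assume "i \<in> {i. (eca 44 ^^ t) p i \<noteq> (eca 44 ^^ t) y i}"
    then have "\<not> (i < c1 \<or> c2 + 1 < i)" using outside by blast
    then show "i \<in> {c1..<c1 + (c2 + 2 - c1)}" by simp
  qed
  then show ?thesis unfolding SInv_def p_def[symmetric] y_def[symmetric] by blast
qed

lemma differences_unbounded_if_wall:
  assumes no_wall: "\<And>t i. \<not> wall ((eca 44 ^^ t) p) i"
    and "wall ((eca 44 ^^ k) y) i0"
  shows "\<not> (\<exists>w. \<forall>t. \<exists>a. {i. (eca 44 ^^ t) p i \<noteq> (eca 44 ^^ t) y i} \<subseteq> {a..<a + w})"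
proof
  assume "\<exists>w. \<forall>t. \<exists>a. {i. (eca 44 ^^ t) p i \<noteq> (eca 44 ^^ t) y i} \<subseteq> {a..<a + w}"
  then obtain w where w: "\<And>t. \<exists>a. {i. (eca 44 ^^ t) p i \<noteq> (eca 44 ^^ t) y i} \<subseteq> {a..<a + w}"
    by blast
  obtain t j where "k \<le> t" "j \<le> i0 - int (nat w + 2)" and wall_j: "wall ((eca 44 ^^ t) y) j"
    using walls_eca_44_far_left[OF assms(2)] by blast
  moreover have "(eca 44 ^^ t) y = (eca 44 ^^ (t - k)) ((eca 44 ^^ k) y)"
    using \<open>k \<le> t\<close> by (metis funpow_add le_add_diff_inverse2 o_apply)
  then have wall_i0: "wall ((eca 44 ^^ t) y) i0"
    using wall_funpow_eca_44[OF assms(2)] by simp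
  \<comment> \<open>Every wall of \<open>y\<close> at time \<open>t\<close> marks a difference, since \<open>p\<close> has none.\<close>
  have differs: "\<exists>d\<in>{c, c + 1}. (eca 44 ^^ t) p d \<noteq> (eca 44 ^^ t) y d"
    if "wall ((eca 44 ^^ t) y) c" for c
    using that no_wall[of t c] by (auto simp: wall_def)
  obtain d1 d2 where "d1 \<in> {j, j + 1}" "d2 \<in> {i0, i0 + 1}"
    "(eca 44 ^^ t) p d1 \<noteq> (eca 44 ^^ t) y d1" "(eca 44 ^^ t) p d2 \<noteq> (eca 44 ^^ t) y d2"
    using differs[OF wall_j] differs[OF wall_i0] by blast
  moreover obtain a where "{i. (eca 44 ^^ t) p i \<noteq> (eca 44 ^^ t) y i} \<subseteq> {a..<a + w}"
    using w by blast
  ultimately have "a \<le> d1" "d2 < a + w" by auto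
  moreover have "w \<le> int (nat w)" by simp
  ultimately show False using \<open>d1 \<in> {j, j + 1}\<close> \<open>d2 \<in> {i0, i0 + 1}\<close> \<open>j \<le> i0 - int (nat w + 2)\<close>
    by auto
qed

lemma SInv_44_iff_agrees:
  assumes no_wall: "\<And>t i. \<not> wall ((eca 44 ^^ t) (per u)) i"
  shows "SInv 44 u x \<longleftrightarrow> (\<forall>k<length x. x ! k = per u (int k))"
proof
  assume "\<forall>k<length x. x ! k = per u (int k)"
  then have "per_patch u x = per u" by (auto simp: per_patch_def)
  then show "SInv 44 u x" unfolding SInv_def by auto
next
  assume "SInv 44 u x"
  show "\<forall>k<length x. x ! k = per u (int k)"
  proof (rule ccontr)
    assume "\<not> (\<forall>k<length x. x ! k = per u (int k))"
    then obtain k0 where k0: "k0 < length x" "per_patch u x (int k0) \<noteq> per u (int k0)"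
      by (auto simp: per_patch_def)
    have "is_011_shift (per u)"
      using wall_eca_44_within_two_steps no_wall by blast
    have "\<not> is_011_shift (per_patch u x)"
    proof
      assume "is_011_shift (per_patch u x)"
      define i where "i = int k0 - int (k0 + 1) * 3"
      have "per_patch u x (int k0) = per_patch u x i"
        using periodic_add_mult[of "per_patch u x" 3 i "int (k0 + 1)"]
          is_011_shift_period[OF \<open>is_011_shift (per_patch u x)\<close>] by (simp add: i_def)
      also have "\<dots> = per u i" by (simp add: i_def per_patch_eq_outside)
      also have "\<dots> = per u (int k0)"
        using periodic_add_mult[of "per u" 3 i "int (k0 + 1)"]
          is_011_shift_period[OF \<open>is_011_shift (per u)\<close>] by (simp add: i_def)
      finally show False using k0 by simp
    qed
    then obtain k i0 where "wall ((eca 44 ^^ k) (per_patch u x)) i0"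
      using wall_eca_44_within_two_steps by blast
    with \<open>SInv 44 u x\<close> show False
      using differences_unbounded_if_wall[OF no_wall] unfolding SInv_def by blast
  qed
qed

lemma SInv_44_pointwise:
  assumes "u \<noteq> []"
  obtains P where "SInv 44 u = (\<lambda>x. \<forall>k<length x. P k (x ! k))"
proof (cases "\<exists>t i. wall ((eca 44 ^^ t) (per u)) i")
  case True
  then have "SInv 44 u = (\<lambda>x. \<forall>k<length x. True)"
    using SInv_44_if_wall[OF assms] by (intro ext) blast
  then show thesis by (rule that)
next
  case False
  then have "SInv 44 u = (\<lambda>x. \<forall>k<length x. x ! k = per u (int k))"
    using SInv_44_iff_agrees by (intro ext) blast
  then show thesis by (rule that)
qed

lemma all_less_add_iff: "(\<forall>k<m + n. Q k) \<longleftrightarrow> (\<forall>k<m. Q k) \<and> (\<forall>k<n. Q (m + k))"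
  for m n :: nat
proof
  assume "(\<forall>k<m. Q k) \<and> (\<forall>k<n. Q (m + k))"
  then show "\<forall>k<m + n. Q k"
    by (metis add_diff_inverse_nat add_less_cancel_left)
qed auto

lemma all_nth_append:
  "(\<forall>k<length (x @ y). P k ((x @ y) ! k)) \<longleftrightarrow>
    (\<forall>k<length x. P k (x ! k)) \<and> (\<forall>k<length y. P (length x + k) (y ! k))"
  by (simp add: all_less_add_iff nth_append)

lemma D_cc_pointwise_le_2: "D_cc (\<lambda>x. \<forall>k<length x. P k (x ! k)) m \<le> 2"
proof -
  have "D_split (\<lambda>x. \<forall>k<length x. P k (x ! k)) m i \<le> 2" for i
  proof -
    define Q :: "(bool list, bool list, bool) protocol" where
      "Q = AliceNode (\<lambda>x. \<forall>k<length x. P k (x ! k))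
        (BobNode (\<lambda>y. \<forall>k<length y. P (i + k) (y ! k)) (Leaf True) (Leaf False)) (Leaf False)"
    have "\<forall>x y. length x = i \<longrightarrow> length y = m - i \<longrightarrow>
        peval Q x y = (\<forall>k<length (x @ y). P k ((x @ y) ! k))"
      unfolding all_nth_append by (simp add: Q_def)
    moreover have "pdepth Q = 2" by (simp add: Q_def)
    ultimately show ?thesis unfolding D_split_def by (intro Least_le) blast
  qed
  then show ?thesis by (simp add: D_cc_def Max_le_iff)
qed

theorem mainTheorem13:
  fixes u :: "bool list"
  assumes "u \<noteq> []"
  shows "\<exists>C::nat. \<forall>n::nat. D_cc (SInv 44 u) n \<le> C"
proof -
  obtain P where "SInv 44 u = (\<lambda>x. \<forall>k<length x. P k (x ! k))"
    using SInv_44_pointwise[OF assms] .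
  then have "D_cc (SInv 44 u) n \<le> 2" for n
    using D_cc_pointwise_le_2 by simp
  then show ?thesis by blast
qed

end
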